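(* Assume proportional damping $D=\alpha M+\beta K$ with $\alpha,\beta\ge0$. Let $\nu_p,\nu_q\ge1$, let $\zeta_1,\dots,\zeta_{\nu_p}>0$ and $\omega_1,\dots,\omega_{\nu_q}>0$ be such that $G(\pm i\zeta_j)$, $G(\pm i\omega_k)$ exist, and let $\rho_j,\varphi_k$ be real weights. Form $\widetilde{\mathbb M},\widetilde{\mathbb K}\in\mathbb{C}^{2\nu_q\times 2\nu_p}$, $\widetilde{\mathbb B}\in\mathbb{C}^{2\nu_q}$, $\widetilde{\mathbb C}\in\mathbb{C}^{1\times2\nu_p}$ using the ordered node lists $(\zeta_1,-\zeta_1,\zeta_2,-\zeta_2,\dots,\zeta_{\nu_p},-\zeta_{\nu_p})$ with weights $(\rho_1,\rho_1,\dots,\rho_{\nu_p},\rho_{\nu_p})$ and $(\omega_1,-\omega_1,\dots,\omega_{\nu_q},-\omega_{\nu_q})$ with weights $(\varphi_1,\varphi_1,\dots,\varphi_{\nu_q},\varphi_{\nu_q})$. For $1\le k\le\nu_q$, $1\le j\le\nu_p$, let $\widetilde{\mathbb M}^{(2)}_{k,j},\widetilde{\mathbb K}^{(2)}_{k,j}\in\mathbb{C}^{2\times2}$ be the submatrices in rows $2k-1,2k$ and columns $2j-1,2j$, $\widetilde{\mathbb B}^{(2)}_k$ the entries $2k-1,2k$ of $\widetilde{\mathbb B}$, $\widetilde{\mathbb C}^{(2)}_j$ the entries $2j-1,2j$ of $\widetilde{\mathbb C}$, and define $$\widetilde{\mathbb M}^{\mathrm R}_{k,j}=\mathcal F_2\widetilde{\mathbb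 M}^{(2)}_{k,j}\mathcal F_1^{\mathrm H},\quad \widetilde{\mathbb K}^{\mathrm R}_{k,j}=\mathcal F_2\widetilde{\mathbb K}^{(2)}_{k,j}\mathcal F_1^{\mathrm H},\quad \widetilde{\mathbb B}^{\mathrm R}_k=\mathcal F_2\widetilde{\mathbb B}^{(2)}_k,\quad \widetilde{\mathbb C}^{\mathrm R}_j=\widetilde{\mathbb C}^{(2)}_j\mathcal F_1^{\mathrm H}.$$ Then: (i) $\widetilde{\mathbb M}^{\mathrm R}_{k,j}$ and $\widetilde{\mathbb K}^{\mathrm R}_{k,j}$ are real $2\times2$ matrices, and $$\widetilde{\mathbb B}^{\mathrm R}_k=\sqrt2\,\varphi_k\begin{bmatrix}\mathrm{Re}\,H(i\omega_k)\\-\mathrm{Im}\,H(i\omega_k)\end{bmatrix},\qquad \widetilde{\mathbb C}^{\mathrm R}_j=\sqrt2\,\rho_j\zeta_j\big[\mathrm{Re}\,H(i\zeta_j)\ \ \mathrm{Im}\,H(i\zeta_j)\big];$$ (ii) with $\Omega_{k,2}=\omega_k^2I_2$, $\Omega_{k,1}=\begin{bmatrix}0&\omega_k\\-\omega_k&0\end{bmatrix}$, $\Theta_{j,2}=\zeta_j^2I_2$, $\Theta_{j,1}=\begin{bmatrix}0&\zeta_j\\-\zeta_j&0\end{bmatrix}$, $$H_{\zeta,kj}=2\varphi_k\rho_j\zeta_j\begin{bmatrix}\mathrm{Re}\,H(i\zeta_j)&\mathrm{Im}\,H(i\zeta_j)\\0&0\end{bmatrix},\qquad H_{\omega,kj}=2\varphi_k\rho_j\zeta_j\begin{bmatrix}\mathrm{Re}\,H(i\omega_k)&0\\-\mathrm{Im}\,H(i\omega_k)&0\end{bmatrix},$$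 the following hold: $$-\Omega_{k,2}\widetilde{\mathbb M}^{\mathrm R}_{k,j}+\Omega_{k,1}\big(\alpha\widetilde{\mathbb M}^{\mathrm R}_{k,j}+\beta\widetilde{\mathbb K}^{\mathrm R}_{k,j}\big)+\widetilde{\mathbb K}^{\mathrm R}_{k,j}=H_{\zeta,kj},$$ $$-\widetilde{\mathbb M}^{\mathrm R}_{k,j}\Theta_{j,2}+\big(\alpha\widetilde{\mathbb M}^{\mathrm R}_{k,j}+\beta\widetilde{\mathbb K}^{\mathrm R}_{k,j}\big)\Theta_{j,1}+\widetilde{\mathbb K}^{\mathrm R}_{k,j}=H_{\omega,kj}.$$
   Context: Single-input single-output second-order system: $M,D,K\in\mathbb{R}^{n\times n}$ with $M$ nonsingular, $B\in\mathbb{R}^{n\times1}$, $C\in\mathbb{R}^{1\times n}$, $G(s)=(s^2M+sD+K)^{-1}$ (wherever the inverse exists), and transfer function $H(s)=CG(s)B$. The superscript $\mathrm H$ denotes conjugate transpose. For an ordered list of real nodes $z_1,\dots,z_{N_p}$ with real weights $r_1,\dots,r_{N_p}$ and an ordered list of real nodes $w_1,\dots,w_{N_q}$ with real weights $f_1,\dots,f_{N_q}$, define $\widetilde U\in\mathbb{C}^{n\times N_p}$ with $j$-th column $r_jz_jG(iz_j)B$, $\widetilde L^{\mathrm H}\in\mathbb{C}^{N_q\times n}$ with $k$-th row $f_kCG(iw_k)$, and $\widetilde{\mathbb M}=\widetilde L^{\mathrm H}M\widetilde U$, $\widetilde{\mathbb K}=\widetilde L^{\mathrm H}K\widetilde U$,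 $\widetilde{\mathbb B}=\widetilde L^{\mathrm H}B$ (entries $f_kH(iw_k)$), $\widetilde{\mathbb C}=C\widetilde U$ (entries $r_jz_jH(iz_j)$). The unitary matrices are $$\mathcal F_1=\frac{1}{\sqrt2}\begin{bmatrix}1&-1\\ i&i\end{bmatrix},\qquad \mathcal F_2=\frac{1}{\sqrt2}\begin{bmatrix}1&1\\ i&-i\end{bmatrix}.$$ *)

theory Defs
  imports "HOL-Analysis.Analysis"
begin

definition cmat :: "real^'n^'m \<Rightarrow> complex^'n^'m" where
  "cmat A = (\<chi> i j. complex_of_real (A $ i $ j))"

definition cvec :: "real^'n \<Rightarrow> complex^'n" where
  "cvec v = (\<chi> i. complex_of_real (v $ i))"

definition ctrans :: "complex^'n^'m \<Rightarrow> complex^'m^'n" where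
  "ctrans A = (\<chi> i j. cnj (A $ j $ i))"

definition pencil :: "real^'n^'n \<Rightarrow> real^'n^'n \<Rightarrow> real^'n^'n \<Rightarrow> complex \<Rightarrow> complex^'n^'n" where
  "pencil M D K s = mat (s^2) ** cmat M + mat s ** cmat D + cmat K"

definition Gfun :: "real^'n^'n \<Rightarrow> real^'n^'n \<Rightarrow> real^'n^'n \<Rightarrow> complex \<Rightarrow> complex^'n^'n" where
  "Gfun M D K s = matrix_inv (pencil M D K s)"

text \<open>Transfer function H(s) = C G(s) B (C stored as a vector of its row entries).\<close>
definition tf :: "real^'n^'n \<Rightarrow> real^'n^'n \<Rightarrow> real^'n^'n \<Rightarrow> real^'n \<Rightarrow> real^'n \<Rightarrow> complex \<Rightarrow> complex" where
  "tf M D K B C s = (\<Sum>i\<in>UNIV. (cvec C) $ i * ((Gfun M D K s *v cvec B) $ i))"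

text \<open>Columns of U-tilde and rows of L-tilde^H, for node/weight lists indexed from 1
  (z j, r j for j = 1..N_p; w k, f k for k = 1..N_q).\<close>
definition Ucol :: "real^'n^'n \<Rightarrow> real^'n^'n \<Rightarrow> real^'n^'n \<Rightarrow> real^'n
   \<Rightarrow> (nat \<Rightarrow> real) \<Rightarrow> (nat \<Rightarrow> real) \<Rightarrow> nat \<Rightarrow> complex^'n" where
  "Ucol M D K B z r j = complex_of_real (r j * z j) *s (Gfun M D K (\<i> * complex_of_real (z j)) *v cvec B)"

definition Lrow :: "real^'n^'n \<Rightarrow> real^'n^'n \<Rightarrow> real^'n^'n \<Rightarrow> real^'n
   \<Rightarrow> (nat \<Rightarrow> real) \<Rightarrow> (nat \<Rightarrow> real) \<Rightarrow> nat \<Rightarrow> complex^'n" where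
  "Lrow M D K C w f k = complex_of_real (f k) *s (cvec C v* Gfun M D K (\<i> * complex_of_real (w k)))"

text \<open>Entries (k,j) of the reduced matrices (1-based row index k, column index j).\<close>
definition MMt where
  "MMt M D K B C z r w f k j =
     (\<Sum>i\<in>UNIV. (Lrow M D K C w f k) $ i * ((cmat M *v Ucol M D K B z r j) $ i))"

definition KKt where
  "KKt M D K B C z r w f k j =
     (\<Sum>i\<in>UNIV. (Lrow M D K C w f k) $ i * ((cmat K *v Ucol M D K B z r j) $ i))"

definition BBt where
  "BBt M D K B C w f k = (\<Sum>i\<in>UNIV. (Lrow M D K C w f k) $ i * (cvec B) $ i)"

definition CCt where
  "CCt M D K B C z r j = (\<Sum>i\<in>UNIV. (cvec C) $ i * (Ucol M D K B z r j) $ i)"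

definition interleave :: "(nat \<Rightarrow> real) \<Rightarrow> nat \<Rightarrow> real" where
  "interleave x m = (if odd m then x ((m + 1) div 2) else - x (m div 2))"

definition dupl :: "(nat \<Rightarrow> real) \<Rightarrow> nat \<Rightarrow> real" where
  "dupl y m = y ((m + 1) div 2)"

definition F1 :: "complex^2^2" where
  "F1 = (let c = complex_of_real (1 / sqrt 2) in vector [vector [c, - c], vector [\<i> * c, \<i> * c]])"

definition F2 :: "complex^2^2" where
  "F2 = (let c = complex_of_real (1 / sqrt 2) in vector [vector [c, c], vector [\<i> * c, - \<i> * c]])"

definition block2 :: "(nat \<Rightarrow> nat \<Rightarrow> complex) \<Rightarrow> nat \<Rightarrow> nat \<Rightarrow> complex^2^2" where
  "block2 A k j = vector [vector [A (2*k-1) (2*j-1), A (2*k-1) (2*j)],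
                          vector [A (2*k)   (2*j-1), A (2*k)   (2*j)]]"

definition seg2 :: "(nat \<Rightarrow> complex) \<Rightarrow> nat \<Rightarrow> complex^2" where
  "seg2 v k = vector [v (2*k-1), v (2*k)]"

definition is_real_mat :: "complex^2^2 \<Rightarrow> bool" where
  "is_real_mat A \<longleftrightarrow> (\<forall>a b. A $ a $ b \<in> \<real>)"

end

theory Submission
  imports Defs
begin

(* The coefficients of P(s) = s^2 M + s D + K are real, so G(conj s) = conj G(s). Hence the column
   of U-tilde at -zeta_j is minus the conjugate of the column u at zeta_j, and the row of L-tilde^H
   at -omega_k is the conjugate of the row l at omega_k: every 2x2 block has the shape
   [[p, -q], [conj q, -conj p]], which F2 (.) F1^H turns into a real matrix. Since
   l P(i omega_k) = phi_k C and P(i zeta_j) u = rho_j zeta_j B, the scalars l P(s) u and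
   l P(s) conj u are known at s = i omega_k and s = +-i zeta_j; with proportional damping they are
   quadratic in s with coefficients from l M u and l K u, and their real and imaginary parts are
   the entries of the equations (ii). *)

definition vcnj :: "complex^'n \<Rightarrow> complex^'n" where
  "vcnj v = (\<chi> i. cnj (v $ i))"

definition mcnj :: "complex^'n^'m \<Rightarrow> complex^'n^'m" where
  "mcnj A = (\<chi> i j. cnj (A $ i $ j))"

definition vdot :: "'a::comm_semiring_1^'n \<Rightarrow> 'a^'n \<Rightarrow> 'a" where
  "vdot x y = (\<Sum>i\<in>UNIV. x $ i * y $ i)"

definition real_block :: "complex \<Rightarrow> complex \<Rightarrow> complex^2^2" where
  "real_block p q = vector [vector [complex_of_real (Re (p + q)), complex_of_real (Im (p - q))],
                            vector [complex_of_real (- Im (p + q)), complex_of_real (Re (p - q))]]"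

lemma matrix_inv_right_left:
  fixes A :: "'a::semiring_1^'n^'m"
  assumes "invertible A"
  shows "A ** matrix_inv A = mat 1 \<and> matrix_inv A ** A = mat 1"
  using assms unfolding invertible_def matrix_inv_def by (rule someI_ex)

lemmas matrix_inv_right = matrix_inv_right_left[THEN conjunct1]
  and matrix_inv_left = matrix_inv_right_left[THEN conjunct2]

lemma matrix_inv_unique:
  fixes A :: "'a::semiring_1^'n^'n"
  assumes "A ** B = mat 1" "B ** A = mat 1"
  shows "matrix_inv A = B"
proof -
  have "invertible A" using assms unfolding invertible_def by blast
  have "matrix_inv A = matrix_inv A ** (A ** B)" using assms by (simp add: matrix_mul_rid)
  also have "\<dots> = B"
    by (simp add: matrix_mul_assoc matrix_inv_left[OF \<open>invertible A\<close>] matrix_mul_lid)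
  finally show ?thesis .
qed

lemma mcnj_mult: "mcnj (A ** B) = mcnj A ** mcnj B"
  by (simp add: mcnj_def matrix_matrix_mult_def vec_eq_iff)

lemma mcnj_mat: "mcnj (mat c) = mat (cnj c)"
  by (simp add: mcnj_def mat_def vec_eq_iff)

lemma mcnj_add: "mcnj (A + B) = mcnj A + mcnj B"
  by (simp add: mcnj_def vec_eq_iff)

lemma mcnj_cmat: "mcnj (cmat A) = cmat A"
  by (simp add: mcnj_def cmat_def vec_eq_iff)

lemma vcnj_cvec: "vcnj (cvec v) = cvec v"
  by (simp add: vcnj_def cvec_def vec_eq_iff)

lemma vcnj_vcnj: "vcnj (vcnj v) = v"
  by (simp add: vcnj_def vec_eq_iff)

lemma vcnj_scale_real: "vcnj (complex_of_real c *s v) = complex_of_real c *s vcnj v"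
  by (simp add: vcnj_def vec_eq_iff)

lemma mcnj_matrix_vector_mult: "mcnj A *v vcnj v = vcnj (A *v v)"
  by (simp add: mcnj_def vcnj_def matrix_vector_mult_def vec_eq_iff)

lemma mcnj_vector_matrix_mult: "vcnj v v* mcnj A = vcnj (v v* A)"
  by (simp add: mcnj_def vcnj_def vector_matrix_mult_def vec_eq_iff)

lemma pencil_cnj: "pencil M D K (cnj s) = mcnj (pencil M D K s)"
  by (simp add: pencil_def mcnj_add mcnj_mult mcnj_mat mcnj_cmat)

lemma Gfun_cnj:
  assumes "invertible (pencil M D K s)"
  shows "Gfun M D K (cnj s) = mcnj (Gfun M D K s)"
  unfolding Gfun_def pencil_cnj
proof (rule matrix_inv_unique)
  show "mcnj (pencil M D K s) ** mcnj (matrix_inv (pencil M D K s)) = mat 1"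
    "mcnj (matrix_inv (pencil M D K s)) ** mcnj (pencil M D K s) = mat 1"
    by (simp_all add: mcnj_mult[symmetric] matrix_inv_right matrix_inv_left assms mcnj_mat)
qed

lemma vdot_vector_matrix_mult: "vdot (x v* A) y = vdot x (A *v y)"
proof -
  have "vdot (x v* A) y = (\<Sum>i\<in>UNIV. \<Sum>j\<in>UNIV. x $ j * A $ j $ i * y $ i)"
    by (simp add: vdot_def vector_matrix_mult_def sum_distrib_right)
  also have "\<dots> = (\<Sum>j\<in>UNIV. \<Sum>i\<in>UNIV. x $ j * A $ j $ i * y $ i)"
    by (rule sum.swap)
  also have "\<dots> = vdot x (A *v y)"
    by (simp add: vdot_def matrix_vector_mult_def sum_distrib_left mult.assoc)
  finally show ?thesis .
qed

lemma vdot_scale_left: "vdot (c *s x) y = c * vdot x y"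
  by (simp add: vdot_def sum_distrib_left mult.assoc)

lemma vdot_scale_right: "vdot x (c *s y) = c * vdot x y"
  by (simp add: vdot_def sum_distrib_left mult.left_commute)

lemma vdot_add_right: "vdot x (y + z) = vdot x y + vdot x z"
  by (simp add: vdot_def sum.distrib distrib_left)

lemma vdot_uminus_right: "vdot x (- y) = - vdot x (y :: 'a::comm_ring_1^'n)"
  by (simp add: vdot_def sum_negf)

lemma matrix_vector_mult_uminus_right: "A *v - y = - (A *v y :: 'a::comm_ring_1^'m)"
  by (simp add: matrix_vector_mult_def vec_eq_iff sum_negf)

lemma vdot_vcnj: "vdot (vcnj x) (vcnj y) = cnj (vdot x y)"
  by (simp add: vdot_def vcnj_def)

lemma vdot_vcnj_cmat: "vdot (vcnj x) (cmat A *v vcnj y) = cnj (vdot x (cmat A *v y))"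
  by (metis mcnj_cmat mcnj_matrix_vector_mult vdot_vcnj)

lemma mat_mult_left: "mat c ** A = (\<chi> i j. c * A $ i $ j)"
  by (simp add: mat_def matrix_matrix_mult_def vec_eq_iff if_distrib[of "\<lambda>x. x * _"] cong: if_cong)

lemma vdot_mat_mult: "vdot x ((mat c ** A) *v y) = c * vdot x (A *v y)"
  by (simp add: vdot_def matrix_vector_mult_def mat_mult_left sum_distrib_left mult_ac)

lemma cmat_scaleR_add:
  "cmat (a *\<^sub>R A + b *\<^sub>R B) = mat (complex_of_real a) ** cmat A + mat (complex_of_real b) ** cmat B"
  by (simp add: cmat_def vec_eq_iff mat_mult_left)

lemma vdot_pencil_proportional:
  assumes "D = \<alpha> *\<^sub>R M + \<beta> *\<^sub>R K"
  shows "vdot l (pencil M D K s *v u) =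
    s\<^sup>2 * vdot l (cmat M *v u)
    + s * (complex_of_real \<alpha> * vdot l (cmat M *v u) + complex_of_real \<beta> * vdot l (cmat K *v u))
    + vdot l (cmat K *v u)"
  by (simp add: assms pencil_def cmat_scaleR_add matrix_vector_mult_add_rdistrib vdot_add_right
      vdot_mat_mult)

lemma tf_as_vdot: "tf M D K B C s = vdot (cvec C) (Gfun M D K s *v cvec B)"
  by (simp add: tf_def vdot_def)

lemma MMt_as_vdot:
  "MMt M D K B C z r w f = (\<lambda>a b. vdot (Lrow M D K C w f a) (cmat M *v Ucol M D K B z r b))"
  by (simp add: MMt_def vdot_def fun_eq_iff)

lemma KKt_as_vdot:
  "KKt M D K B C z r w f = (\<lambda>a b. vdot (Lrow M D K C w f a) (cmat K *v Ucol M D K B z r b))"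
  by (simp add: KKt_def vdot_def fun_eq_iff)

lemma BBt_as_vdot: "BBt M D K B C w f k = vdot (Lrow M D K C w f k) (cvec B)"
  by (simp add: BBt_def vdot_def)

lemma CCt_as_vdot: "CCt M D K B C z r j = vdot (cvec C) (Ucol M D K B z r j)"
  by (simp add: CCt_def vdot_def)

lemma Lrow_interleave_odd:
  "1 \<le> k \<Longrightarrow> Lrow M D K C (interleave \<omega>) (dupl \<phi>) (2*k-1)
     = complex_of_real (\<phi> k) *s (cvec C v* Gfun M D K (\<i> * complex_of_real (\<omega> k)))"
  by (simp add: Lrow_def interleave_def dupl_def)

lemma Ucol_interleave_odd:
  "1 \<le> j \<Longrightarrow> Ucol M D K B (interleave \<zeta>) (dupl \<rho>) (2*j-1)
     = complex_of_real (\<rho> j * \<zeta> j) *s (Gfun M D K (\<i> * complex_of_real (\<zeta> j)) *v cvec B)"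
  by (simp add: Ucol_def interleave_def dupl_def)

lemma Lrow_interleave_even:
  assumes "invertible (pencil M D K (\<i> * complex_of_real (\<omega> k)))" "1 \<le> k"
  shows "Lrow M D K C (interleave \<omega>) (dupl \<phi>) (2*k)
    = vcnj (Lrow M D K C (interleave \<omega>) (dupl \<phi>) (2*k-1))"
proof -
  have "Lrow M D K C (interleave \<omega>) (dupl \<phi>) (2*k)
      = complex_of_real (\<phi> k) *s (cvec C v* Gfun M D K (cnj (\<i> * complex_of_real (\<omega> k))))"
    by (simp add: Lrow_def interleave_def dupl_def)
  also have "\<dots> = complex_of_real (\<phi> k) *s
      (vcnj (cvec C) v* mcnj (Gfun M D K (\<i> * complex_of_real (\<omega> k))))"
    by (simp only: Gfun_cnj[OF assms(1)] vcnj_cvec)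
  also have "\<dots> = vcnj (Lrow M D K C (interleave \<omega>) (dupl \<phi>) (2*k-1))"
    by (simp only: Lrow_interleave_odd[OF assms(2)] mcnj_vector_matrix_mult vcnj_scale_real)
  finally show ?thesis .
qed

lemma Ucol_interleave_even:
  assumes "invertible (pencil M D K (\<i> * complex_of_real (\<zeta> j)))" "1 \<le> j"
  shows "Ucol M D K B (interleave \<zeta>) (dupl \<rho>) (2*j)
    = - vcnj (Ucol M D K B (interleave \<zeta>) (dupl \<rho>) (2*j-1))"
proof -
  have "Ucol M D K B (interleave \<zeta>) (dupl \<rho>) (2*j)
      = - (complex_of_real (\<rho> j * \<zeta> j) *s (Gfun M D K (cnj (\<i> * complex_of_real (\<zeta> j))) *v cvec B))"
    by (simp add: Ucol_def interleave_def dupl_def vec_eq_iff)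
  also have "\<dots> = - (complex_of_real (\<rho> j * \<zeta> j) *s
      (mcnj (Gfun M D K (\<i> * complex_of_real (\<zeta> j))) *v vcnj (cvec B)))"
    by (simp only: Gfun_cnj[OF assms(1)] vcnj_cvec)
  also have "\<dots> = - vcnj (Ucol M D K B (interleave \<zeta>) (dupl \<rho>) (2*j-1))"
    by (simp only: Ucol_interleave_odd[OF assms(2)] mcnj_matrix_vector_mult vcnj_scale_real)
  finally show ?thesis .
qed

lemma vdot_Lrow_interleave_odd_B:
  assumes "1 \<le> k"
  shows "vdot (Lrow M D K C (interleave \<omega>) (dupl \<phi>) (2*k-1)) (cvec B)
     = complex_of_real (\<phi> k) * tf M D K B C (\<i> * complex_of_real (\<omega> k))"
  unfolding Lrow_interleave_odd[OF assms] vdot_scale_left vdot_vector_matrix_mult tf_as_vdot ..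

lemma vdot_C_Ucol_interleave_odd:
  assumes "1 \<le> j"
  shows "vdot (cvec C) (Ucol M D K B (interleave \<zeta>) (dupl \<rho>) (2*j-1))
     = complex_of_real (\<rho> j * \<zeta> j) * tf M D K B C (\<i> * complex_of_real (\<zeta> j))"
  unfolding Ucol_interleave_odd[OF assms] vdot_scale_right tf_as_vdot ..

lemma F_realify_block:
  "F2 ** vector [vector [p, - q], vector [cnj q, - cnj p]] ** ctrans F1 = real_block p q"
  unfolding F1_def F2_def Let_def real_block_def ctrans_def
  by (simp add: vec_eq_iff forall_2 sum_2 matrix_matrix_mult_def complex_eq_iff algebra_simps
      power2_eq_square)

lemma F2_realify_column:
  "F2 *v vector [complex_of_real c * h, complex_of_real c * cnj h]
     = (sqrt 2 * c) *\<^sub>R (vector [complex_of_real (Re h), complex_of_real (- Im h)] :: complex^2)"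
  unfolding F2_def Let_def
  by (simp add: vec_eq_iff forall_2 sum_2 matrix_vector_mult_def complex_eq_iff field_simps)

lemma F1_realify_row:
  "vector [complex_of_real c * h, - (complex_of_real c * cnj h)] v* ctrans F1
     = (sqrt 2 * c) *\<^sub>R (vector [complex_of_real (Re h), complex_of_real (Im h)] :: complex^2)"
  unfolding F1_def Let_def ctrans_def
  by (simp add: vec_eq_iff forall_2 sum_2 vector_matrix_mult_def complex_eq_iff field_simps)

lemma is_real_mat_real_block: "is_real_mat (real_block p q)"
  by (simp add: is_real_mat_def real_block_def forall_2)

lemma block2_cnj_pattern:
  fixes row col :: "nat \<Rightarrow> complex^'n" and A :: "real^'n^'n"
  assumes "row (2*k) = vcnj (row (2*k-1))" "col (2*j) = - vcnj (col (2*j-1))"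
  defines "p \<equiv> vdot (row (2*k-1)) (cmat A *v col (2*j-1))"
    and "q \<equiv> vdot (row (2*k-1)) (cmat A *v vcnj (col (2*j-1)))"
  shows "block2 (\<lambda>a b. vdot (row a) (cmat A *v col b)) k j
    = vector [vector [p, - q], vector [cnj q, - cnj p]]"
  using vdot_vcnj_cmat[of "row (2*k-1)" A "vcnj (col (2*j-1))"]
  by (simp add: block2_def assms matrix_vector_mult_uminus_right vdot_uminus_right
      vdot_vcnj_cmat vcnj_vcnj)

lemma F_block2_interleave:
  fixes M D K :: "real^'n^'n" and B C :: "real^'n" and \<zeta> \<rho> \<omega> \<phi> :: "nat \<Rightarrow> real"
  assumes "invertible (pencil M D K (\<i> * complex_of_real (\<zeta> j)))"
    and "invertible (pencil M D K (\<i> * complex_of_real (\<omega> k)))" and "1 \<le> j" "1 \<le> k"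
  defines "l \<equiv> Lrow M D K C (interleave \<omega>) (dupl \<phi>) (2*k-1)"
    and "u \<equiv> Ucol M D K B (interleave \<zeta>) (dupl \<rho>) (2*j-1)"
  shows "F2 ** block2 (\<lambda>a b. vdot (Lrow M D K C (interleave \<omega>) (dupl \<phi>) a)
      (cmat A *v Ucol M D K B (interleave \<zeta>) (dupl \<rho>) b)) k j ** ctrans F1
    = real_block (vdot l (cmat A *v u)) (vdot l (cmat A *v vcnj u))"
  unfolding l_def u_def
    block2_cnj_pattern[OF Lrow_interleave_even[where \<omega> = \<omega> and k = k, OF assms(2,4)]
      Ucol_interleave_even[where \<zeta> = \<zeta> and j = j, OF assms(1,3)]]
  by (rule F_realify_block)

lemma F2_seg2_BBt_interleave:
  fixes M D K :: "real^'n^'n" and B C :: "real^'n" and \<omega> \<phi> :: "nat \<Rightarrow> real"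
  assumes "invertible (pencil M D K (\<i> * complex_of_real (\<omega> k)))" "1 \<le> k"
  defines "Hw \<equiv> tf M D K B C (\<i> * complex_of_real (\<omega> k))"
  shows "F2 *v seg2 (BBt M D K B C (interleave \<omega>) (dupl \<phi>)) k
    = (sqrt 2 * \<phi> k) *\<^sub>R (vector [complex_of_real (Re Hw), complex_of_real (- Im Hw)] :: complex^2)"
proof -
  let ?l = "Lrow M D K C (interleave \<omega>) (dupl \<phi>) (2*k-1)"
  have "BBt M D K B C (interleave \<omega>) (dupl \<phi>) (2*k) = cnj (vdot ?l (cvec B))"
    unfolding BBt_as_vdot Lrow_interleave_even[where \<omega> = \<omega> and k = k, OF assms(1,2)]
    by (metis vcnj_cvec vdot_vcnj)
  then show ?thesis
    unfolding seg2_def Hw_def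
    by (simp only: BBt_as_vdot vdot_Lrow_interleave_odd_B[OF assms(2)] complex_cnj_mult
        complex_cnj_complex_of_real F2_realify_column)
qed

lemma seg2_CCt_F1_interleave:
  fixes M D K :: "real^'n^'n" and B C :: "real^'n" and \<zeta> \<rho> :: "nat \<Rightarrow> real"
  assumes "invertible (pencil M D K (\<i> * complex_of_real (\<zeta> j)))" "1 \<le> j"
  defines "Hz \<equiv> tf M D K B C (\<i> * complex_of_real (\<zeta> j))"
  shows "seg2 (CCt M D K B C (interleave \<zeta>) (dupl \<rho>)) j v* ctrans F1
    = (sqrt 2 * \<rho> j * \<zeta> j) *\<^sub>R (vector [complex_of_real (Re Hz), complex_of_real (Im Hz)] :: complex^2)"
proof -
  let ?u = "Ucol M D K B (interleave \<zeta>) (dupl \<rho>) (2*j-1)"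
  have "CCt M D K B C (interleave \<zeta>) (dupl \<rho>) (2*j) = - cnj (vdot (cvec C) ?u)"
    unfolding CCt_as_vdot vdot_uminus_right
      Ucol_interleave_even[where \<zeta> = \<zeta> and j = j, OF assms(1,2)]
    by (metis vcnj_cvec vdot_vcnj)
  then show ?thesis
    unfolding seg2_def Hz_def mult.assoc
    by (simp only: CCt_as_vdot vdot_C_Ucol_interleave_odd[OF assms(2)] complex_cnj_mult
        complex_cnj_complex_of_real F1_realify_row)
qed

lemma interpolation_identities:
  fixes M D K :: "real^'n^'n" and B C :: "real^'n" and \<zeta> \<rho> \<omega> \<phi> :: "nat \<Rightarrow> real"
  assumes "invertible (pencil M D K (\<i> * complex_of_real (\<zeta> j)))"
    and "invertible (pencil M D K (\<i> * complex_of_real (\<omega> k)))" and "1 \<le> j" "1 \<le> k"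
  defines "l \<equiv> Lrow M D K C (interleave \<omega>) (dupl \<phi>) (2*k-1)"
    and "u \<equiv> Ucol M D K B (interleave \<zeta>) (dupl \<rho>) (2*j-1)"
    and "Hz \<equiv> tf M D K B C (\<i> * complex_of_real (\<zeta> j))"
    and "Hw \<equiv> tf M D K B C (\<i> * complex_of_real (\<omega> k))"
    and "c \<equiv> complex_of_real (\<phi> k * \<rho> j * \<zeta> j)"
  shows "vdot l (pencil M D K (\<i> * complex_of_real (\<omega> k)) *v u) = c * Hz"
    and "vdot l (pencil M D K (\<i> * complex_of_real (\<omega> k)) *v vcnj u) = c * cnj Hz"
    and "vdot l (pencil M D K (\<i> * complex_of_real (\<zeta> j)) *v u) = c * Hw"
    and "vdot l (pencil M D K (cnj (\<i> * complex_of_real (\<zeta> j))) *v vcnj u) = c * Hw"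
proof -
  have row: "l v* pencil M D K (\<i> * complex_of_real (\<omega> k)) = complex_of_real (\<phi> k) *s cvec C"
    using matrix_inv_left[OF assms(2)] unfolding l_def Lrow_interleave_odd[OF assms(4)]
    by (simp add: scalar_vector_matrix_assoc
        vector_matrix_mul_assoc Gfun_def)
  have col: "pencil M D K (\<i> * complex_of_real (\<zeta> j)) *v u = complex_of_real (\<rho> j * \<zeta> j) *s cvec B"
    using matrix_inv_right[OF assms(1)] unfolding u_def Ucol_interleave_odd[OF assms(3)]
    by (simp add: vector_scalar_commute
        matrix_vector_mul_assoc Gfun_def)
  have Cu: "vdot (cvec C) u = complex_of_real (\<rho> j * \<zeta> j) * Hz"
    unfolding u_def Hz_def by (rule vdot_C_Ucol_interleave_odd[OF assms(3)])
  have lB: "vdot l (cvec B) = complex_of_real (\<phi> k) * Hw"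
    unfolding l_def Hw_def by (rule vdot_Lrow_interleave_odd_B[OF assms(4)])
  have C_cnj_u: "vdot (cvec C) (vcnj u) = cnj (vdot (cvec C) u)"
    by (metis vcnj_cvec vdot_vcnj)
  show "vdot l (pencil M D K (\<i> * complex_of_real (\<omega> k)) *v u) = c * Hz"
    unfolding vdot_vector_matrix_mult[symmetric] row vdot_scale_left Cu by (simp add: c_def)
  show "vdot l (pencil M D K (\<i> * complex_of_real (\<omega> k)) *v vcnj u) = c * cnj Hz"
    unfolding vdot_vector_matrix_mult[symmetric] row vdot_scale_left C_cnj_u Cu by (simp add: c_def)
  show "vdot l (pencil M D K (\<i> * complex_of_real (\<zeta> j)) *v u) = c * Hw"
    unfolding col vdot_scale_right lB by (simp add: c_def)
  show "vdot l (pencil M D K (cnj (\<i> * complex_of_real (\<zeta> j))) *v vcnj u) = c * Hw"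
    unfolding pencil_cnj mcnj_matrix_vector_mult col vcnj_scale_real vcnj_cvec vdot_scale_right lB
    by (simp add: c_def)
qed

lemma real_block_left_equation:
  fixes p q P Q h :: complex and w a b c :: real
  assumes "(\<i> * w)\<^sup>2 * p + (\<i> * w) * (a * p + b * P) + P = c * h"
    and "(\<i> * w)\<^sup>2 * q + (\<i> * w) * (a * q + b * Q) + Q = c * cnj h"
  shows "- ((w\<^sup>2 *\<^sub>R (mat 1 :: complex^2^2)) ** real_block p q)
      + (vector [vector [0, complex_of_real w], vector [- complex_of_real w, 0]] :: complex^2^2)
        ** (a *\<^sub>R real_block p q + b *\<^sub>R real_block P Q) + real_block P Q
    = (2 * c) *\<^sub>R (vector [vector [complex_of_real (Re h), complex_of_real (Im h)], vector [0, 0]] :: complex^2^2)"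
proof -
  have "- (w\<^sup>2 * Re p) - w * (a * Im p + b * Im P) + Re P = c * Re h"
    "- (w\<^sup>2 * Im p) + w * (a * Re p + b * Re P) + Im P = c * Im h"
    "- (w\<^sup>2 * Re q) - w * (a * Im q + b * Im Q) + Re Q = c * Re h"
    "- (w\<^sup>2 * Im q) + w * (a * Re q + b * Re Q) + Im Q = - (c * Im h)"
    using assms[THEN arg_cong[where f = Re]] assms[THEN arg_cong[where f = Im]]
    by (simp_all add: power2_eq_square algebra_simps)
  then show ?thesis
    by (simp add: vec_eq_iff forall_2 sum_2 matrix_matrix_mult_def real_block_def mat_def
        complex_eq_iff algebra_simps)
qed

lemma real_block_right_equation:
  fixes p q P Q h :: complex and z a b c :: real
  assumes "(\<i> * z)\<^sup>2 * p + (\<i> * z) * (a * p + b * P) + P = c * h"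
    and "(cnj (\<i> * z))\<^sup>2 * q + cnj (\<i> * z) * (a * q + b * Q) + Q = c * h"
  shows "- (real_block p q ** (z\<^sup>2 *\<^sub>R (mat 1 :: complex^2^2)))
      + (a *\<^sub>R real_block p q + b *\<^sub>R real_block P Q)
        ** (vector [vector [0, complex_of_real z], vector [- complex_of_real z, 0]] :: complex^2^2)
      + real_block P Q
    = (2 * c) *\<^sub>R (vector [vector [complex_of_real (Re h), 0], vector [complex_of_real (- Im h), 0]] :: complex^2^2)"
proof -
  have "- (z\<^sup>2 * Re p) - z * (a * Im p + b * Im P) + Re P = c * Re h"
    "- (z\<^sup>2 * Im p) + z * (a * Re p + b * Re P) + Im P = c * Im h"
    "- (z\<^sup>2 * Re q) + z * (a * Im q + b * Im Q) + Re Q = c * Re h"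
    "- (z\<^sup>2 * Im q) - z * (a * Re q + b * Re Q) + Im Q = c * Im h"
    using assms[THEN arg_cong[where f = Re]] assms[THEN arg_cong[where f = Im]]
    by (simp_all add: power2_eq_square algebra_simps)
  then show ?thesis
    by (simp add: vec_eq_iff forall_2 sum_2 matrix_matrix_mult_def real_block_def mat_def
        complex_eq_iff algebra_simps)
qed

theorem mainTheorem3:
  fixes M D K :: "real^'n^'n" and B C :: "real^'n"
    and \<alpha> \<beta> :: real and \<nu>p \<nu>q :: nat
    and \<zeta> \<rho> \<omega> \<phi> :: "nat \<Rightarrow> real"
  assumes M_inv: "invertible M"
    and damp: "D = \<alpha> *\<^sub>R M + \<beta> *\<^sub>R K" and "\<alpha> \<ge> 0" and "\<beta> \<ge> 0"
    and "\<nu>p \<ge> 1" and "\<nu>q \<ge> 1"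
    and zeta_pos: "\<And>j. 1 \<le> j \<Longrightarrow> j \<le> \<nu>p \<Longrightarrow> \<zeta> j > 0"
    and omega_pos: "\<And>k. 1 \<le> k \<Longrightarrow> k \<le> \<nu>q \<Longrightarrow> \<omega> k > 0"
    and G_zeta: "\<And>j. 1 \<le> j \<Longrightarrow> j \<le> \<nu>p \<Longrightarrow>
         invertible (pencil M D K (\<i> * complex_of_real (\<zeta> j))) \<and>
         invertible (pencil M D K (- \<i> * complex_of_real (\<zeta> j)))"
    and G_omega: "\<And>k. 1 \<le> k \<Longrightarrow> k \<le> \<nu>q \<Longrightarrow>
         invertible (pencil M D K (\<i> * complex_of_real (\<omega> k))) \<and>
         invertible (pencil M D K (- \<i> * complex_of_real (\<omega> k)))"
    and k_rng: "1 \<le> k" "k \<le> \<nu>q"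
    and j_rng: "1 \<le> j" "j \<le> \<nu>p"
  shows
    "let z = interleave \<zeta>; r = dupl \<rho>; w = interleave \<omega>; f = dupl \<phi>;
         MR = F2 ** block2 (MMt M D K B C z r w f) k j ** ctrans F1;
         KR = F2 ** block2 (KKt M D K B C z r w f) k j ** ctrans F1;
         BR = F2 *v seg2 (BBt M D K B C w f) k;
         CR = seg2 (CCt M D K B C z r) j v* ctrans F1;
         Hz = tf M D K B C (\<i> * complex_of_real (\<zeta> j));
         Hw = tf M D K B C (\<i> * complex_of_real (\<omega> k));
         Om2 = (\<omega> k ^ 2) *\<^sub>R (mat 1 :: complex^2^2);
         Om1 = vector [vector [0, complex_of_real (\<omega> k)], vector [- complex_of_real (\<omega> k), 0]] :: complex^2^2;
         Th2 = (\<zeta> j ^ 2) *\<^sub>R (mat 1 :: complex^2^2);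
         Th1 = vector [vector [0, complex_of_real (\<zeta> j)], vector [- complex_of_real (\<zeta> j), 0]] :: complex^2^2;
         HZ = (2 * \<phi> k * \<rho> j * \<zeta> j) *\<^sub>R
                (vector [vector [complex_of_real (Re Hz), complex_of_real (Im Hz)], vector [0, 0]] :: complex^2^2);
         HW = (2 * \<phi> k * \<rho> j * \<zeta> j) *\<^sub>R
                (vector [vector [complex_of_real (Re Hw), 0], vector [complex_of_real (- Im Hw), 0]] :: complex^2^2)
     in is_real_mat MR \<and> is_real_mat KR
        \<and> BR = (sqrt 2 * \<phi> k) *\<^sub>R (vector [complex_of_real (Re Hw), complex_of_real (- Im Hw)] :: complex^2)
        \<and> CR = (sqrt 2 * \<rho> j * \<zeta> j) *\<^sub>R (vector [complex_of_real (Re Hz), complex_of_real (Im Hz)] :: complex^2)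
        \<and> - (Om2 ** MR) + Om1 ** (\<alpha> *\<^sub>R MR + \<beta> *\<^sub>R KR) + KR = HZ
        \<and> - (MR ** Th2) + (\<alpha> *\<^sub>R MR + \<beta> *\<^sub>R KR) ** Th1 + KR = HW"
proof -
  have inv_z: "invertible (pencil M D K (\<i> * complex_of_real (\<zeta> j)))"
    using G_zeta[OF j_rng] by blast
  have inv_w: "invertible (pencil M D K (\<i> * complex_of_real (\<omega> k)))"
    using G_omega[OF k_rng] by blast
  note identities = interpolation_identities[where \<zeta> = \<zeta> and j = j and \<omega> = \<omega> and k = k
      and B = B and C = C and \<rho> = \<rho> and \<phi> = \<phi>, OF inv_z inv_w j_rng(1) k_rng(1),
      unfolded vdot_pencil_proportional[OF damp]]
  show ?thesis
    unfolding Let_def MMt_as_vdot KKt_as_vdot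
      F_block2_interleave[where \<zeta> = \<zeta> and j = j and \<omega> = \<omega> and k = k,
        OF inv_z inv_w j_rng(1) k_rng(1)]
      F2_seg2_BBt_interleave[where \<omega> = \<omega> and k = k, OF inv_w k_rng(1)]
      seg2_CCt_F1_interleave[where \<zeta> = \<zeta> and j = j, OF inv_z j_rng(1)]
    using real_block_left_equation[OF identities(1,2)] real_block_right_equation[OF identities(3,4)]
    by (simp add: is_real_mat_real_block mult.assoc)
qed

end
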